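(* Let $G$ be an abelian group and let $Z$ be a finite multiset of elements of $G$ with $\dim(Z)\geqslant1$. Then $$|\Sigma(Z)|\leqslant 2^{2\dim(Z)\left(\log_2\left(\frac{|Z|}{\dim(Z)}\right)+2\right)}=\left(\frac{4|Z|}{\dim(Z)}\right)^{2\dim(Z)}.$$
   Context: $|Z|$ is the size of $Z$ counted with multiplicity. The additive span of $Z$ is $\Sigma(Z)=\{\sum_{z\in Z'}z: Z'\subseteq Z\}$, where $Z'$ ranges over sub-multisets of $Z$. A (multi)set $S$ is dissociated if any two sub-multisets of $S$ with equal sums are equal. $\dim(Z)$ is the size of the largest dissociated sub-multiset of $Z$. *)

theory Defs
  imports "HOL-Analysis.Analysis" "HOL-Library.Multiset"
begin

definition additive_span :: "'a::ab_group_add multiset \<Rightarrow> 'a set" where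
  "additive_span Z = {sum_mset W | W. W \<subseteq># Z}"

definition dissociated :: "'a::ab_group_add multiset \<Rightarrow> bool" where
  "dissociated S \<longleftrightarrow> (\<forall>A B. A \<subseteq># S \<longrightarrow> B \<subseteq># S \<longrightarrow> sum_mset A = sum_mset B \<longrightarrow> A = B)"

definition mdim :: "'a::ab_group_add multiset \<Rightarrow> nat" where
  "mdim Z = Max {size S | S. S \<subseteq># Z \<and> dissociated S}"

end

theory Submission
  imports Defs
begin

(* Write Z as f 0, ..., f (n - 1). Every element of Sigma(Z) is the sum of a unique index set of
   least binary code sum_{i in W} 2^i, so these minimal representatives number |Sigma(Z)|, and by
   Pajor's lemma they shatter at least as many index sets T. Every shattered T indexes a dissociated
   sub-multiset: two distinct subsets of T with equal sums leave, after removing their common part,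
   disjoint U and V with equal sums, and exchanging U and V inside the representatives whose traces
   on T are U and V shows that neither has the smaller code. Hence shattered sets have at most
   d = dim(Z) elements and |Sigma(Z)| <= sum_{k <= d} (n choose k) <= (e n / d)^d <= (4 n / d)^(2 d). *)

lemma subseteq_image_mset_mset_setE:
  assumes "finite I" "W \<subseteq># image_mset f (mset_set I)"
  obtains J where "J \<subseteq> I" "W = image_mset f (mset_set J)"
proof -
  obtain B C where BC: "mset_set I = B + C" "W = image_mset f B"
    using image_mset_eq_plusD[of f "mset_set I" W] assms(2)
    by (metis subset_mset.add_diff_inverse)
  have "count B x = count (mset_set (set_mset B)) x" for x
  proof -
    have "count B x \<le> count (mset_set I) x" using BC(1) by simp
    also have "\<dots> \<le> 1" by (simp add: count_mset_set')
    finally have "count B x \<le> 1" .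
    show ?thesis
    proof (cases "x \<in># B")
      case True
      then have "0 < count B x" by simp
      with \<open>count B x \<le> 1\<close> have "count B x = 1" by linarith
      with True show ?thesis by simp
    qed (simp add: not_in_iff)
  qed
  then have "B = mset_set (set_mset B)" by (simp add: multiset_eq_iff)
  moreover have "set_mset B \<subseteq> I" using BC(1) assms(1) by (metis Un_iff finite_set_mset_mset_set set_mset_union subsetI)
  ultimately show ?thesis using that BC(2) by metis
qed

lemma additive_span_image_mset_mset_set:
  assumes "finite I"
  shows "additive_span (image_mset f (mset_set I)) = sum f ` Pow I"
proof
  show "additive_span (image_mset f (mset_set I)) \<subseteq> sum f ` Pow I"
    unfolding additive_span_def using assms
    by (auto simp: sum_unfold_sum_mset elim!: subseteq_image_mset_mset_setE)
  show "sum f ` Pow I \<subseteq> additive_span (image_mset f (mset_set I))"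
    unfolding additive_span_def using assms
    by (auto simp: sum_unfold_sum_mset intro!: image_mset_subseteq_mono subset_imp_msubset_mset_set)
qed

lemma dissociated_image_mset_mset_set:
  assumes "finite T" "inj_on (sum f) (Pow T)"
  shows "dissociated (image_mset f (mset_set T))"
  unfolding dissociated_def
proof (intro allI impI)
  fix A B assume "A \<subseteq># image_mset f (mset_set T)" "B \<subseteq># image_mset f (mset_set T)"
    and AB: "sum_mset A = sum_mset B"
  then obtain JA JB where "JA \<subseteq> T" "A = image_mset f (mset_set JA)"
    and "JB \<subseteq> T" "B = image_mset f (mset_set JB)"
    using assms(1) by (metis subseteq_image_mset_mset_setE)
  moreover from this have "sum f JA = sum f JB" using AB by (simp add: sum_unfold_sum_mset)
  ultimately show "A = B" using assms(2) by (auto dest: inj_onD)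
qed

lemma
  fixes Z :: "'a::ab_group_add multiset"
  shows size_le_mdim: "S \<subseteq># Z \<Longrightarrow> dissociated S \<Longrightarrow> size S \<le> mdim Z"
    and mdim_le_size: "mdim Z \<le> size Z"
proof -
  let ?D = "{size S | S. S \<subseteq># Z \<and> dissociated S}"
  have "?D \<subseteq> {..size Z}" by (auto simp: size_mset_mono)
  then have fin: "finite ?D" by (rule finite_subset) simp
  show "S \<subseteq># Z \<Longrightarrow> dissociated S \<Longrightarrow> size S \<le> mdim Z"
    unfolding mdim_def using fin by (intro Max_ge) auto
  have "dissociated {#}" by (simp add: dissociated_def)
  then have "0 \<in> ?D" by force
  then have "mdim Z \<in> ?D" unfolding mdim_def using fin by (intro Max_in) blast+
  then show "mdim Z \<le> size Z" using \<open>?D \<subseteq> {..size Z}\<close> by auto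
qed

lemma ex_image_mset_mset_set_atLeastLessThan:
  "\<exists>f. Z = image_mset f (mset_set {0..<size Z})"
proof -
  obtain xs where "mset xs = Z" using ex_mset by blast
  moreover have "xs = map ((!) xs) [0..<length xs]" by (simp add: map_nth)
  ultimately show ?thesis by (metis mset_map mset_upt size_mset)
qed

definition shatters :: "'a set set \<Rightarrow> 'a set \<Rightarrow> bool" where
  "shatters F T \<longleftrightarrow> (\<forall>U\<subseteq>T. \<exists>W\<in>F. W \<inter> T = U)"

lemma shatters_mono: "F \<subseteq> G \<Longrightarrow> shatters F T \<Longrightarrow> shatters G T"
  unfolding shatters_def by (meson subsetD)

lemma shatters_Diff_image:
  assumes "shatters ((\<lambda>W. W - {x}) ` F) T" "x \<notin> T"
  shows "shatters F T"
  unfolding shatters_def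
proof (intro allI impI)
  fix U assume "U \<subseteq> T"
  then obtain W where "W \<in> F" "(W - {x}) \<inter> T = U"
    using assms(1) unfolding shatters_def by blast
  moreover have "(W - {x}) \<inter> T = W \<inter> T" using assms(2) by blast
  ultimately show "\<exists>W\<in>F. W \<inter> T = U" by auto
qed

lemma shatters_insert:
  assumes "shatters {W\<in>F. x \<notin> W} T" "shatters ((\<lambda>W. W - {x}) ` {W\<in>F. x \<in> W}) T" "x \<notin> T"
  shows "shatters F (insert x T)"
  unfolding shatters_def
proof (intro allI impI)
  fix U assume U: "U \<subseteq> insert x T"
  show "\<exists>W\<in>F. W \<inter> insert x T = U"
  proof (cases "x \<in> U")
    case True
    have "U - {x} \<subseteq> T" using U by blast
    then have "\<exists>W'\<in>(\<lambda>W. W - {x}) ` {W\<in>F. x \<in> W}. W' \<inter> T = U - {x}"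
      using assms(2) unfolding shatters_def by meson
    then obtain W where "W \<in> F" "x \<in> W" "(W - {x}) \<inter> T = U - {x}" by auto
    then have "W \<inter> insert x T = U" using True by blast
    with \<open>W \<in> F\<close> show ?thesis by blast
  next
    case False
    then have "U \<subseteq> T" using U by blast
    then have "\<exists>W\<in>{W\<in>F. x \<notin> W}. W \<inter> T = U"
      using assms(1) unfolding shatters_def by meson
    then obtain W where "W \<in> F" "x \<notin> W" "W \<inter> T = U" by auto
    then have "W \<inter> insert x T = U" by blast
    with \<open>W \<in> F\<close> show ?thesis by blast
  qed
qed

(* A set shattered by both parts is counted twice on the left; it is matched by itself and by
   its extension with x on the right. *)
lemma card_shattered_parts_le:
  assumes "finite A" "x \<notin> A"
  defines "S \<equiv> \<lambda>G. {T. T \<subseteq> A \<and> shatters G T}"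
  shows "card (S {W\<in>F. x \<notin> W}) + card (S ((\<lambda>W. W - {x}) ` {W\<in>F. x \<in> W}))
           \<le> card {T. T \<subseteq> insert x A \<and> shatters F T}"
proof -
  define S0 where "S0 = S {W\<in>F. x \<notin> W}"
  define S1 where "S1 = S ((\<lambda>W. W - {x}) ` {W\<in>F. x \<in> W})"
  have fin: "finite S0" "finite S1" using assms(1) by (simp_all add: S0_def S1_def S_def)
  have x: "x \<notin> T" if "T \<in> S0 \<union> S1" for T
    using that assms(2) by (auto simp: S0_def S1_def S_def)
  have "card S0 + card S1 = card (S0 \<union> S1) + card (S0 \<inter> S1)"
    using card_Un_Int[OF fin] .
  also have "\<dots> = card (S0 \<union> S1 \<union> insert x ` (S0 \<inter> S1))"
  proof -
    have "inj_on (insert x) (S0 \<inter> S1)"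
      using x by (intro inj_onI) (metis Diff_insert_absorb Int_iff Un_iff)
    moreover have "(S0 \<union> S1) \<inter> insert x ` (S0 \<inter> S1) = {}"
      using x by blast
    ultimately show ?thesis using fin by (simp add: card_Un_disjoint card_image)
  qed
  also have "\<dots> \<le> card {T. T \<subseteq> insert x A \<and> shatters F T}"
  proof (rule card_mono)
    show "finite {T. T \<subseteq> insert x A \<and> shatters F T}" using assms(1) by simp
    have "S0 \<union> S1 \<subseteq> {T. T \<subseteq> insert x A \<and> shatters F T}"
      using assms(2) unfolding S0_def S1_def S_def
      by (auto intro: shatters_Diff_image shatters_mono[rotated])
    moreover have "insert x ` (S0 \<inter> S1) \<subseteq> {T. T \<subseteq> insert x A \<and> shatters F T}"
      using assms(2) unfolding S0_def S1_def S_def by (auto intro: shatters_insert)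
    ultimately show "S0 \<union> S1 \<union> insert x ` (S0 \<inter> S1) \<subseteq> {T. T \<subseteq> insert x A \<and> shatters F T}"
      by blast
  qed
  finally show ?thesis by (simp add: S0_def S1_def)
qed

lemma card_le_card_shattered:
  assumes "finite A" "F \<subseteq> Pow A"
  shows "card F \<le> card {T. T \<subseteq> A \<and> shatters F T}"
  using assms
proof (induction A arbitrary: F rule: finite_induct)
  case empty
  then consider "F = {}" | "F = {{}}" by (auto simp: subset_singleton_iff)
  then show ?case
  proof cases
    case 2
    then have "{} \<in> {T. T \<subseteq> {} \<and> shatters F T}" by (simp add: shatters_def)
    then show ?thesis using 2 by (simp add: Suc_le_eq card_gt_0_iff)
  qed simp
next
  case (insert x A)
  define F0 where "F0 = {W\<in>F. x \<notin> W}"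
  define F1 where "F1 = (\<lambda>W. W - {x}) ` {W\<in>F. x \<in> W}"
  have "F0 \<subseteq> Pow A" "F1 \<subseteq> Pow A" using insert.prems by (auto simp: F0_def F1_def)
  then have IH: "card F0 \<le> card {T. T \<subseteq> A \<and> shatters F0 T}"
    "card F1 \<le> card {T. T \<subseteq> A \<and> shatters F1 T}"
    by (simp_all add: insert.IH)
  have "finite F"
    using insert.prems insert.hyps(1) by (meson finite_Pow_iff finite_insert finite_subset)
  moreover have "F = F0 \<union> {W\<in>F. x \<in> W}" "F0 \<inter> {W\<in>F. x \<in> W} = {}" by (auto simp: F0_def)
  ultimately have "card F = card F0 + card {W\<in>F. x \<in> W}"
    by (metis card_Un_disjoint finite_Un)
  also have "card {W\<in>F. x \<in> W} = card F1"
    unfolding F1_def by (rule card_image[symmetric]) (auto simp: inj_on_def)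
  finally show ?case
    using IH card_shattered_parts_le[OF insert.hyps, of F] unfolding F0_def F1_def by linarith
qed

definition bin_code :: "nat set \<Rightarrow> nat" where
  "bin_code W = (\<Sum>i\<in>W. 2 ^ i)"

lemma bin_code_less:
  assumes "finite U" "finite V" "U \<inter> V = {}" "Max (U \<union> V) \<in> V"
  shows "bin_code U < bin_code V"
proof -
  define m where "m = Max (U \<union> V)"
  have "U \<subseteq> {..<m}"
  proof
    fix u assume "u \<in> U"
    then have "u \<le> m" "u \<noteq> m" using assms by (auto simp: m_def)
    then show "u \<in> {..<m}" by simp
  qed
  then have "bin_code U \<le> (\<Sum>i<m. 2 ^ i)"
    unfolding bin_code_def by (intro sum_mono2) auto
  also have "(\<Sum>i<k. 2 ^ i) < (2::nat) ^ k" for k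
    by (induction k) simp_all
  also have "2 ^ m \<le> bin_code V"
    unfolding bin_code_def m_def using assms by (intro member_le_sum) auto
  finally show ?thesis .
qed

lemma bin_code_eq_imp_empty:
  assumes "finite U" "finite V" "U \<inter> V = {}" "bin_code U = bin_code V"
  shows "U = {} \<and> V = {}"
proof (rule ccontr)
  assume "\<not> (U = {} \<and> V = {})"
  then have "Max (U \<union> V) \<in> U \<union> V" using assms(1,2) by (intro Max_in) auto
  then show False
  proof
    assume "Max (U \<union> V) \<in> U"
    then have "bin_code V < bin_code U"
      using assms by (intro bin_code_less) (auto simp: Un_commute Int_commute)
    with assms(4) show False by simp
  next
    assume "Max (U \<union> V) \<in> V"
    then have "bin_code U < bin_code V" using assms by (intro bin_code_less)
    with assms(4) show False by simp
  qed
qed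

definition minimal_reps :: "(nat \<Rightarrow> 'a::comm_monoid_add) \<Rightarrow> nat set \<Rightarrow> nat set set" where
  "minimal_reps f I =
     {W. W \<subseteq> I \<and> (\<forall>W'\<subseteq>I. sum f W' = sum f W \<longrightarrow> bin_code W \<le> bin_code W')}"

lemma sum_image_minimal_reps: "sum f ` minimal_reps f I = sum f ` Pow I"
proof
  show "sum f ` Pow I \<subseteq> sum f ` minimal_reps f I"
  proof
    fix x assume "x \<in> sum f ` Pow I"
    then obtain W where "W \<subseteq> I" "sum f W = x" by auto
    then obtain V where "V \<subseteq> I \<and> sum f V = x"
      and "\<forall>V'. V' \<subseteq> I \<and> sum f V' = x \<longrightarrow> bin_code V \<le> bin_code V'"
      using ex_has_least_nat[of "\<lambda>V. V \<subseteq> I \<and> sum f V = x" W bin_code] by blast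
    then show "x \<in> sum f ` minimal_reps f I" by (auto simp: minimal_reps_def)
  qed
qed (auto simp: minimal_reps_def)

lemma bin_code_le_of_minimal_rep:
  assumes W: "W \<in> minimal_reps f I" and "finite I"
    and "V \<subseteq> W" "U \<subseteq> I" "U \<inter> W = {}" "sum f U = sum f V"
  shows "bin_code V \<le> bin_code U"
proof -
  have "W \<subseteq> I" using W by (simp add: minimal_reps_def)
  then have fin: "finite W" "finite U" using assms finite_subset by auto
  define W' where "W' = (W - V) \<union> U"
  have disj: "(W - V) \<inter> U = {}" using assms by auto
  have "sum f W' = sum f (W - V) + sum f V"
    unfolding W'_def using disj fin assms by (simp add: sum.union_disjoint)
  also have "\<dots> = sum f W" using fin assms by (metis sum.subset_diff)
  finally have "sum f W' = sum f W" .
  moreover have "W' \<subseteq> I" using \<open>W \<subseteq> I\<close> assms unfolding W'_def by blast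
  ultimately have "bin_code W \<le> bin_code W'" using W unfolding minimal_reps_def by blast
  also have "bin_code W' = bin_code (W - V) + bin_code U"
    unfolding W'_def bin_code_def using disj fin by (simp add: sum.union_disjoint)
  finally show ?thesis
    using fin assms unfolding bin_code_def by (metis add_le_cancel_left sum.subset_diff)
qed

lemma inj_on_sum_if_shattered_by_minimal_reps:
  fixes f :: "nat \<Rightarrow> 'a::cancel_comm_monoid_add"
  assumes "finite I" "T \<subseteq> I" "shatters (minimal_reps f I) T"
  shows "inj_on (sum f) (Pow T)"
proof (rule inj_onI)
  fix A B assume A: "A \<in> Pow T" and B: "B \<in> Pow T" and AB: "sum f A = sum f B"
  have fin: "finite A" "finite B"
    using A B assms(1,2) by (auto intro: finite_subset[OF _ \<open>finite I\<close>])
  define U where "U = A - B"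
  define V where "V = B - A"
  have "sum f (A \<inter> B) + sum f U = sum f (A \<inter> B) + sum f V"
    using AB fin unfolding U_def V_def by (metis Int_commute sum.Int_Diff)
  then have UV: "sum f U = sum f V" by simp
  have code_le: "bin_code X \<le> bin_code Y"
    if "X \<subseteq> T" "Y \<subseteq> T" "X \<inter> Y = {}" "sum f X = sum f Y" for X Y
  proof -
    obtain W where "W \<in> minimal_reps f I" "W \<inter> T = X"
      using assms(3) \<open>X \<subseteq> T\<close> unfolding shatters_def by meson
    then show ?thesis
      using that assms bin_code_le_of_minimal_rep[of W f I X Y] by auto
  qed
  have "U \<subseteq> T" "V \<subseteq> T" "U \<inter> V = {}" using A B by (auto simp: U_def V_def)
  then have "bin_code U = bin_code V"
    using code_le[of U V] code_le[of V U] UV by (simp add: Int_commute)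
  then have "U = {} \<and> V = {}"
    using fin by (intro bin_code_eq_imp_empty) (auto simp: U_def V_def)
  then show "A = B" by (auto simp: U_def V_def)
qed

lemma card_subsets_card_le:
  assumes "finite A"
  shows "card {T. T \<subseteq> A \<and> card T \<le> d} \<le> (\<Sum>k\<le>d. card A choose k)"
proof -
  have "{T. T \<subseteq> A \<and> card T \<le> d} = (\<Union>k\<le>d. {T. T \<subseteq> A \<and> card T = k})" by auto
  then have "card {T. T \<subseteq> A \<and> card T \<le> d} \<le> (\<Sum>k\<le>d. card {T. T \<subseteq> A \<and> card T = k})"
    using card_UN_le[of "{..d}" "\<lambda>k. {T. T \<subseteq> A \<and> card T = k}"] by simp
  also have "\<dots> = (\<Sum>k\<le>d. card A choose k)" using n_subsets[OF assms] by simp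
  finally show ?thesis .
qed

lemma sum_binomial_le_exp_pow:
  assumes "0 < d" "d \<le> n"
  shows "real (\<Sum>k\<le>d. n choose k) \<le> (exp 1 * real n / real d) ^ d"
proof -
  define t where "t = real d / real n"
  have t: "0 < t" "t \<le> 1" using assms by (auto simp: t_def)
  have "real (\<Sum>k\<le>d. n choose k) * t ^ d = (\<Sum>k\<le>d. real (n choose k) * t ^ d)"
    by (simp add: sum_distrib_right)
  also have "\<dots> \<le> (\<Sum>k\<le>d. real (n choose k) * t ^ k)"
    using t by (intro sum_mono mult_left_mono power_decreasing) auto
  also have "\<dots> \<le> (\<Sum>k\<le>n. real (n choose k) * t ^ k)"
    using assms t by (intro sum_mono2) auto
  also have "\<dots> = (t + 1) ^ n" by (simp add: binomial_ring)
  also have "\<dots> \<le> exp t ^ n"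
    using t by (intro power_mono) (auto simp: add.commute)
  also have "\<dots> = exp 1 ^ d"
    using assms by (simp add: t_def flip: exp_of_nat_mult)
  finally have "real (\<Sum>k\<le>d. n choose k) \<le> exp 1 ^ d / t ^ d"
    using t by (simp add: pos_le_divide_eq)
  also have "\<dots> = (exp 1 * real n / real d) ^ d"
    by (simp add: t_def power_divide power_mult_distrib)
  finally show ?thesis .
qed

lemma sum_binomial_le_four_pow:
  assumes "0 < d" "d \<le> n"
  shows "real (\<Sum>k\<le>d. n choose k) \<le> (4 * real n / real d) ^ (2 * d)"
proof -
  have ge1: "1 \<le> 4 * real n / real d" using assms by simp
  have "real (\<Sum>k\<le>d. n choose k) \<le> (exp 1 * real n / real d) ^ d"
    using sum_binomial_le_exp_pow[OF assms] .
  also have "\<dots> \<le> (4 * real n / real d) ^ d"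
    using exp_le by (intro power_mono divide_right_mono mult_right_mono) auto
  also have "\<dots> \<le> (4 * real n / real d) ^ (2 * d)"
    using ge1 by (intro power_increasing) auto
  finally show ?thesis .
qed

lemma powr_log_eq_power:
  assumes "0 < y"
  shows "2 powr (2 * real d * (log 2 y + 2)) = (4 * y) ^ (2 * d)"
proof -
  have "2 powr (log 2 y + 2) = 4 * y" using assms by (simp add: powr_add)
  then have "2 powr (2 * real d * (log 2 y + 2)) = (4 * y) powr real (2 * d)"
    by (metis mult.commute of_nat_mult of_nat_numeral powr_powr)
  also have "\<dots> = (4 * y) ^ (2 * d)" using assms by (intro powr_realpow) simp
  finally show ?thesis .
qed

lemma card_additive_span_le_sum_binomial:
  fixes Z :: "'a::ab_group_add multiset"
  shows "card (additive_span Z) \<le> (\<Sum>k\<le>mdim Z. size Z choose k)"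
proof -
  define I where "I = {0..<size Z}"
  obtain f where Z: "Z = image_mset f (mset_set I)"
    unfolding I_def using ex_image_mset_mset_set_atLeastLessThan by blast
  define M where "M = minimal_reps f I"
  have M: "M \<subseteq> Pow I" by (auto simp: M_def minimal_reps_def)
  have card_shattered_le: "card T \<le> mdim Z" if T: "T \<subseteq> I" "shatters M T" for T
  proof -
    have "finite T" using T(1) finite_subset unfolding I_def by blast
    have "dissociated (image_mset f (mset_set T))"
      using T unfolding M_def I_def
      by (intro dissociated_image_mset_mset_set \<open>finite T\<close> inj_on_sum_if_shattered_by_minimal_reps) auto
    moreover have "image_mset f (mset_set T) \<subseteq># Z"
      unfolding Z by (intro image_mset_subseteq_mono subset_imp_msubset_mset_set T(1)) (simp add: I_def)
    ultimately show ?thesis using size_le_mdim by fastforce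
  qed
  have "card (additive_span Z) = card (sum f ` M)"
    unfolding M_def sum_image_minimal_reps Z by (simp add: additive_span_image_mset_mset_set I_def)
  also have "\<dots> \<le> card M"
    using M by (intro card_image_le) (auto simp: I_def intro: finite_subset)
  also have "\<dots> \<le> card {T. T \<subseteq> I \<and> shatters M T}"
    using M by (intro card_le_card_shattered) (auto simp: I_def)
  also have "\<dots> \<le> card {T. T \<subseteq> I \<and> card T \<le> mdim Z}"
    using card_shattered_le by (intro card_mono) (auto simp: I_def)
  also have "\<dots> \<le> (\<Sum>k\<le>mdim Z. card I choose k)"
    by (intro card_subsets_card_le) (simp add: I_def)
  finally show ?thesis by (simp add: I_def)
qed

theorem corollary3p6:
  fixes Z :: "'a::ab_group_add multiset"
  assumes "mdim Z \<ge> 1"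
  shows "real (card (additive_span Z))
           \<le> 2 powr (2 * real (mdim Z) * (log 2 (real (size Z) / real (mdim Z)) + 2))
       \<and> 2 powr (2 * real (mdim Z) * (log 2 (real (size Z) / real (mdim Z)) + 2))
           = (4 * real (size Z) / real (mdim Z)) ^ (2 * mdim Z)"
proof -
  have d: "0 < mdim Z" "mdim Z \<le> size Z" using assms mdim_le_size by auto
  have "real (card (additive_span Z)) \<le> real (\<Sum>k\<le>mdim Z. size Z choose k)"
    using card_additive_span_le_sum_binomial by (simp only: of_nat_le_iff)
  also have "\<dots> \<le> (4 * real (size Z) / real (mdim Z)) ^ (2 * mdim Z)"
    using sum_binomial_le_four_pow[OF d] .
  moreover have "2 powr (2 * real (mdim Z) * (log 2 (real (size Z) / real (mdim Z)) + 2))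
      = (4 * real (size Z) / real (mdim Z)) ^ (2 * mdim Z)"
    using powr_log_eq_power[of "real (size Z) / real (mdim Z)" "mdim Z"] d by simp
  ultimately show ?thesis by simp
qed

end
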